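(* Let $s,t$ be positive integers with $t$ a power of $2$, $h=\log_2 t$, and $0<\varepsilon<1$. For each $j=1,\dots,h$ let $\mathcal{H}_j\subseteq[s]^{d_j}$, where $d_j=t\,2^{-j}$, be a set that intersects the set of $\varepsilon$-good level $j$ extensions of $\tau$ for every $t\times s$ red/blue matrix $M$ in which each row has at least $s/2$ red entries and every labeling $\tau$ (for $M$) that is $\varepsilon$-good up to level $j-1$. Then $\mathcal{H}=\mathcal{H}_1\times\cdots\times\mathcal{H}_h$, viewed as a set of labelings of the inner nodes of $T$ (the level-$j$ nodes, ordered left to right, receiving the labels from the $j$-th factor), is a hitting set for the family of sets of $\varepsilon$-good labelings of $T$: for every such matrix $M$, some labeling in $\mathcal{H}$ is an $\varepsilon$-good labeling of $T$ (i.e. $\varepsilon$-good up to level $h$).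
   Context: $[s]=\{1,\dots,s\}$. Cyclically shifting a row by $\sigma$ moves the entry in column $a$ to column $((a-1+\sigma)\bmod s)+1$. $T$ is a rooted plane complete binary tree with $t$ leaves (every inner node has a left and right child, all leaves at the same distance from the root); the $i$-th leaf from the left corresponds to the $i$-th row of $M$. A node is at level $j$ if its distance to the leaves is $j$ (leaves at level $0$, root at level $h$); there are $d_j$ nodes at level $j$, ordered left to right. A labeling assigns to inner nodes labels in $[s]$. For an inner node $v$ whose subtree has leaves (rows) $i,\dots,i+r-1$ and a labeling of the inner nodes of that subtree, define row shifts by: row $i$ has shift $0$, and row $q+1$ has shift equal to the shift of row $q$ plus the label of the lowest common ancestor of leaves $q$ and $q+1$. The shifted submatrix of $v$ consists of these $r$ rows each cyclically shifted by its shift; a column of it is red if all its $r$ entries are red. The labeling of the subtree of $v$ is $\varepsilon$-good if this shifted submatrix has at least $s\,((1-\varepsilon)/2)^{r}$ red columns. A labeling of $T$ is $\varepsilon$-good up to level $j$ if every subtree rooted at an inner node of level at most $j$ is $\varepsilon$-good (higher levels irrelevant); it is $\varepsilon$-good if it is $\varepsilon$-good up to level $h$. Given $\tau$ that is $\varepsilon$-good up to level $j-1$, $\sigma\in[s]^{d_j}$ is an $\varepsilon$-good level $j$ extension of $\tau$ if $\tau$ with level-$j$ nodes labeled by $\sigma$ is $\varepsilon$-good up to level $j$. *)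

theory Defs
  imports Complex_Main
begin

text \<open>Matrix: M :: nat \<Rightarrow> nat \<Rightarrow> bool, M i a = True means entry (row i, column a) is red;
  rows are 1..t, columns 1..s.
  Tree T with t = 2^h leaves: the k-th node (k = 1..t div 2^j) at level j (1..h) has as leaves
  the rows (k-1)*2^j+1 .. k*2^j.
  A labeling is tau :: nat \<Rightarrow> nat list, tau j is the list of labels of the level-j nodes
  from left to right, so node (j,k) has label tau j ! (k-1).\<close>

definition cyc_shift :: "nat \<Rightarrow> nat \<Rightarrow> nat \<Rightarrow> nat" where
  "cyc_shift s \<sigma> a = ((a - 1 + \<sigma>) mod s) + 1"

text \<open>Level of the lowest common ancestor of leaves q and q+1.\<close>
definition lca_level :: "nat \<Rightarrow> nat" where
  "lca_level q = (LEAST j. (q - 1) div 2 ^ j = q div 2 ^ j)"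

definition lca_label :: "(nat \<Rightarrow> nat list) \<Rightarrow> nat \<Rightarrow> nat" where
  "lca_label \<tau> q = \<tau> (lca_level q) ! ((q - 1) div 2 ^ (lca_level q))"

text \<open>Shift of row i+m in a subtree whose first row is i.\<close>
definition row_shift :: "(nat \<Rightarrow> nat list) \<Rightarrow> nat \<Rightarrow> nat \<Rightarrow> nat" where
  "row_shift \<tau> i m = (\<Sum>q\<in>{i..<i+m}. lca_label \<tau> q)"

definition red_columns ::
  "nat \<Rightarrow> (nat \<Rightarrow> nat \<Rightarrow> bool) \<Rightarrow> (nat \<Rightarrow> nat list) \<Rightarrow> nat \<Rightarrow> nat \<Rightarrow> nat set" where
  "red_columns s M \<tau> j k =
     {b \<in> {1..s}. \<forall>m < 2 ^ j. \<exists>a \<in> {1..s}.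
        M ((k - 1) * 2 ^ j + 1 + m) a \<and>
        cyc_shift s (row_shift \<tau> ((k - 1) * 2 ^ j + 1) m) a = b}"

definition good_node ::
  "nat \<Rightarrow> real \<Rightarrow> (nat \<Rightarrow> nat \<Rightarrow> bool) \<Rightarrow> (nat \<Rightarrow> nat list) \<Rightarrow> nat \<Rightarrow> nat \<Rightarrow> bool" where
  "good_node s \<epsilon> M \<tau> j k \<longleftrightarrow>
     real (card (red_columns s M \<tau> j k)) \<ge> real s * ((1 - \<epsilon>) / 2) ^ (2 ^ j)"

definition good_upto ::
  "nat \<Rightarrow> nat \<Rightarrow> real \<Rightarrow> (nat \<Rightarrow> nat \<Rightarrow> bool) \<Rightarrow> nat \<Rightarrow> (nat \<Rightarrow> nat list) \<Rightarrow> bool" where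
  "good_upto s t \<epsilon> M j \<tau> \<longleftrightarrow>
     (\<forall>l \<in> {1..j}. \<forall>k \<in> {1..t div 2 ^ l}. good_node s \<epsilon> M \<tau> l k)"

definition is_labeling :: "nat \<Rightarrow> nat \<Rightarrow> nat \<Rightarrow> (nat \<Rightarrow> nat list) \<Rightarrow> bool" where
  "is_labeling s t h \<tau> \<longleftrightarrow>
     (\<forall>l \<in> {1..h}. length (\<tau> l) = t div 2 ^ l \<and> set (\<tau> l) \<subseteq> {1..s})"

definition half_red :: "nat \<Rightarrow> nat \<Rightarrow> (nat \<Rightarrow> nat \<Rightarrow> bool) \<Rightarrow> bool" where
  "half_red s t M \<longleftrightarrow> (\<forall>i \<in> {1..t}. real (card {a \<in> {1..s}. M i a}) \<ge> real s / 2)"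

end

theory Submission
  imports Defs
begin

text \<open>The labeling is built level by level from the leaves upwards: a labeling that is
  \<open>\<epsilon>\<close>-good up to level \<open>j - 1\<close> is extended by a level-\<open>j\<close> labeling taken from \<open>H j\<close>, which
  exists by the hitting property of \<open>H j\<close>. Labels already chosen on lower levels are never
  changed, so after \<open>h\<close> steps every level carries a labeling from the corresponding
  \<open>H j\<close>.\<close>

lemma levelwise_greedy_choice:
  fixes P :: "nat \<Rightarrow> (nat \<Rightarrow> 'a) \<Rightarrow> bool" and H :: "nat \<Rightarrow> 'a set"
  assumes base: "P 0 \<tau>\<^sub>0"
    and step: "\<And>j \<tau>. j < h \<Longrightarrow> P j \<tau> \<Longrightarrow> \<exists>\<sigma> \<in> H (Suc j). P (Suc j) (\<tau>(Suc j := \<sigma>))"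
  shows "\<exists>\<tau>. (\<forall>j \<in> {1..h}. \<tau> j \<in> H j) \<and> P h \<tau>"
proof -
  have "\<exists>\<tau>. (\<forall>l \<in> {1..j}. \<tau> l \<in> H l) \<and> P j \<tau>" if "j \<le> h" for j
    using that
  proof (induction j)
    case 0
    then show ?case using base by auto
  next
    case (Suc j)
    then obtain \<tau> where chosen: "\<forall>l \<in> {1..j}. \<tau> l \<in> H l" and "P j \<tau>"
      by auto
    with Suc.prems step obtain \<sigma> where "\<sigma> \<in> H (Suc j)" and "P (Suc j) (\<tau>(Suc j := \<sigma>))"
      by (meson Suc_le_lessD)
    moreover have "\<forall>l \<in> {1..Suc j}. (\<tau>(Suc j := \<sigma>)) l \<in> H l"
      using chosen \<open>\<sigma> \<in> H (Suc j)\<close> by (auto simp: le_Suc_eq)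
    ultimately show ?case by blast
  qed
  then show ?thesis by blast
qed

lemma is_labeling_replicate:
  "s > 0 \<Longrightarrow> is_labeling s t h (\<lambda>l. replicate (t div 2 ^ l) 1)"
  by (auto simp: is_labeling_def)

lemma is_labeling_update:
  assumes "is_labeling s t h \<tau>" and "length \<sigma> = t div 2 ^ j" and "set \<sigma> \<subseteq> {1..s}"
  shows "is_labeling s t h (\<tau>(j := \<sigma>))"
  using assms by (auto simp: is_labeling_def)

lemma good_upto_0 [simp]: "good_upto s t \<epsilon> M 0 \<tau>"
  by (simp add: good_upto_def)

theorem proposition5:
  fixes s t h :: nat and \<epsilon> :: real and H :: "nat \<Rightarrow> nat list set"
  assumes "s > 0" and "t = 2 ^ h" and "0 < \<epsilon>" and "\<epsilon> < 1"
    and H_sub: "\<forall>j \<in> {1..h}. H j \<subseteq> {\<sigma>. length \<sigma> = t div 2 ^ j \<and> set \<sigma> \<subseteq> {1..s}}"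
    and H_hit: "\<forall>j \<in> {1..h}. \<forall>M \<tau>. half_red s t M \<longrightarrow> is_labeling s t h \<tau> \<longrightarrow>
                  good_upto s t \<epsilon> M (j - 1) \<tau> \<longrightarrow>
                  (\<exists>\<sigma> \<in> H j. good_upto s t \<epsilon> M j (\<tau>(j := \<sigma>)))"
  shows "\<forall>M. half_red s t M \<longrightarrow>
           (\<exists>lab. (\<forall>j \<in> {1..h}. lab j \<in> H j) \<and> good_upto s t \<epsilon> M h lab)"
proof (intro allI impI)
  fix M assume "half_red s t M"
  let ?P = "\<lambda>j \<tau>. is_labeling s t h \<tau> \<and> good_upto s t \<epsilon> M j \<tau>"
  have "\<exists>\<sigma> \<in> H (Suc j). ?P (Suc j) (\<tau>(Suc j := \<sigma>))" if "j < h" and "?P j \<tau>" for j \<tau>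
  proof -
    have level: "Suc j \<in> {1..h}" using \<open>j < h\<close> by simp
    with H_hit \<open>half_red s t M\<close> \<open>?P j \<tau>\<close> obtain \<sigma>
      where "\<sigma> \<in> H (Suc j)" and "good_upto s t \<epsilon> M (Suc j) (\<tau>(Suc j := \<sigma>))"
      by fastforce
    moreover have "is_labeling s t h (\<tau>(Suc j := \<sigma>))"
      using H_sub level \<open>\<sigma> \<in> H (Suc j)\<close> \<open>?P j \<tau>\<close> by (blast intro: is_labeling_update)
    ultimately show ?thesis by blast
  qed
  then show "\<exists>lab. (\<forall>j \<in> {1..h}. lab j \<in> H j) \<and> good_upto s t \<epsilon> M h lab"
    using levelwise_greedy_choice[where P = ?P] is_labeling_replicate[OF \<open>s > 0\<close>]
    by (metis good_upto_0)
qed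

end
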